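(* If $E$ and $F$ are non-degenerated $C$-pseudo-cones with $E=z_1+\mathbb{A}_1$ and $F=z_2+\mathbb{A}_2$ ($z_i\in C$, $\mathbb{A}_i$ $C$-asymptotic sets), then $E+F=(z_1+z_2)+(\mathbb{A}_1+\mathbb{A}_2)$ is a non-degenerated $C$-pseudo-cone with $C$-starting point $z_1+z_2$.
   Context: $C\subset\mathbb{R}^n$ ($n\ge2$) is a pointed closed convex cone with nonempty interior. A $C$-pseudo-cone is a nonempty closed convex set $E$ with $o\notin E$, $\lambda x\in E$ for all $x\in E,\lambda\ge1$, and recession cone equal to $C$. A $C$-asymptotic set is an unbounded closed convex set $\mathbb{A}\subset C$ with nonempty interior and $o\notin\mathbb{A}$ such that $\lim_{x\in\partial\mathbb{A},|x|\to\infty}d(x,\partial C)=0$. A non-degenerated $C$-pseudo-cone is a $C$-pseudo-cone $E$ that can be written as $E=z+\mathbb{A}$ with $z\in C$ and $\mathbb{A}$ a $C$-asymptotic set (this decomposition is unique); $z$ is called its $C$-starting point. *)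

theory Defs
  imports "HOL-Analysis.Analysis"
begin

definition pointed_cone :: "'a::euclidean_space set \<Rightarrow> bool" where
  "pointed_cone C \<longleftrightarrow> convex_cone C \<and> closed C \<and> interior C \<noteq> {} \<and>
     C \<inter> uminus ` C = {0}"

definition minkowski_sum :: "'a::real_vector set \<Rightarrow> 'a set \<Rightarrow> 'a set" where
  "minkowski_sum A B = {x + y | x y. x \<in> A \<and> y \<in> B}"

definition translate :: "'a::real_vector \<Rightarrow> 'a set \<Rightarrow> 'a set" where
  "translate z A = (\<lambda>x. z + x) ` A"

definition rec_cone :: "'a::real_vector set \<Rightarrow> 'a set" where
  "rec_cone E = {y. \<forall>x\<in>E. \<forall>t::real. t \<ge> 0 \<longrightarrow> x + t *\<^sub>R y \<in> E}"

definition pseudo_cone :: "'a::euclidean_space set \<Rightarrow> 'a set \<Rightarrow> bool" where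
  "pseudo_cone C E \<longleftrightarrow> E \<noteq> {} \<and> closed E \<and> convex E \<and> 0 \<notin> E \<and>
     (\<forall>x\<in>E. \<forall>l::real. l \<ge> 1 \<longrightarrow> l *\<^sub>R x \<in> E) \<and> rec_cone E = C"

definition asymptotic_set :: "'a::euclidean_space set \<Rightarrow> 'a set \<Rightarrow> bool" where
  "asymptotic_set C A \<longleftrightarrow> \<not> bounded A \<and> closed A \<and> convex A \<and> A \<subseteq> C \<and>
     interior A \<noteq> {} \<and> 0 \<notin> A \<and>
     (\<forall>\<epsilon>>0. \<exists>R. \<forall>x\<in>frontier A. norm x \<ge> R \<longrightarrow> infdist x (frontier C) < \<epsilon>)"

definition nondeg_pseudo_cone :: "'a::euclidean_space set \<Rightarrow> 'a set \<Rightarrow> bool" where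
  "nondeg_pseudo_cone C E \<longleftrightarrow> pseudo_cone C E \<and>
     (\<exists>z A. z \<in> C \<and> asymptotic_set C A \<and> E = translate z A)"

definition starting_point :: "'a::euclidean_space set \<Rightarrow> 'a set \<Rightarrow> 'a" where
  "starting_point C E = (THE z. z \<in> C \<and> (\<exists>A. asymptotic_set C A \<and> E = translate z A))"

end

theory Submission
  imports Defs
begin

text \<open>Translation commutes with Minkowski sums, so the theorem rests on two facts about
  \<open>C\<close>-asymptotic sets \<open>A\<close> with \<open>A + C \<subseteq> A\<close> (which the recession cone of a pseudo-cone guarantees).
  First, the sum of two of them is again \<open>C\<close>-asymptotic. It is closed because on a pointed cone
  \<open>norm a\<close> is bounded by a multiple of \<open>norm (a + b)\<close>; and a supporting hyperplane at a frontier point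
  of the sum supports both summands, which pins far frontier points of the sum close to the frontier
  of \<open>C\<close>. Second, if both \<open>A\<close> and \<open>A + v\<close> are of this kind then \<open>v = 0\<close> (in dimension at least 2):
  otherwise one of \<open>v\<close> and \<open>- v\<close>, say \<open>v\<close>, lies outside \<open>C\<close>, a supporting hyperplane of \<open>C\<close>
  through a ray of \<open>C\<close> separates \<open>v\<close> from \<open>C\<close>, and since \<open>A\<close> comes arbitrarily close to that
  hyperplane, \<open>A + v\<close> leaves \<open>C\<close>. Hence the starting point is unique.\<close>

section \<open>Pointed cones\<close>

lemma pointed_cone_convex_cone: "pointed_cone C \<Longrightarrow> convex_cone C"
  by (simp add: pointed_cone_def)

lemma pointed_cone_closed: "pointed_cone C \<Longrightarrow> closed C"
  by (simp add: pointed_cone_def)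

lemma pointed_cone_interior: "pointed_cone C \<Longrightarrow> interior C \<noteq> {}"
  by (simp add: pointed_cone_def)

lemma pointed_cone_convex: "pointed_cone C \<Longrightarrow> convex C"
  by (simp add: pointed_cone_def convex_cone_def)

lemma pointed_cone_zero: "pointed_cone C \<Longrightarrow> 0 \<in> C"
  by (simp add: pointed_cone_convex_cone convex_cone_contains_0)

lemma pointed_cone_scaleR: "pointed_cone C \<Longrightarrow> x \<in> C \<Longrightarrow> 0 \<le> t \<Longrightarrow> t *\<^sub>R x \<in> C"
  by (meson conic_mul convex_cone_def pointed_cone_convex_cone)

lemma pointed_cone_uminus_eq_0:
  assumes "pointed_cone C" "x \<in> C" "- x \<in> C"
  shows "x = 0"
proof -
  have "- x \<in> C \<inter> uminus ` C" using assms(2,3) by blast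
  then show ?thesis using assms(1) unfolding pointed_cone_def by auto
qed

lemma pointed_cone_interior_ball:
  assumes "pointed_cone C"
  obtains u \<rho> where "0 < \<rho>" "ball u \<rho> \<subseteq> C"
  using pointed_cone_interior[OF assms] mem_interior by blast

lemma frontier_pointed_cone_nonempty:
  fixes C :: "'a::euclidean_space set"
  assumes "pointed_cone C"
  shows "frontier C \<noteq> {}"
proof -
  obtain b :: 'a where "b \<in> Basis" using SOME_Basis by blast
  then have "b \<noteq> 0" using nonzero_Basis by blast
  then have "C \<noteq> UNIV" using pointed_cone_uminus_eq_0[OF assms, of b] by auto
  moreover have "C \<noteq> {}" using pointed_cone_zero[OF assms] by blast
  ultimately show ?thesis by (rule frontier_not_empty[rotated])
qed

lemma infdist_frontier_ge:
  assumes "ball p e \<subseteq> S" "frontier S \<noteq> {}"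
  shows "e \<le> infdist p (frontier S)"
proof -
  have "e \<le> dist p f" if "f \<in> frontier S" for f
  proof (rule ccontr)
    assume "\<not> e \<le> dist p f"
    then have "f \<in> ball p e" by simp
    then have "f \<in> interior S" using assms(1) interior_maximal open_ball by blast
    then show False using that by (simp add: frontier_def)
  qed
  then show ?thesis using assms(2) by (simp add: infdist_notempty cINF_greatest)
qed

lemma ball_subset_of_infdist_frontier:
  fixes S :: "'a::real_normed_vector set"
  assumes "x \<in> S" "e \<le> infdist x (frontier S)"
  shows "ball x e \<subseteq> S"
proof (rule ccontr)
  assume out: "\<not> ball x e \<subseteq> S"
  then have "0 < e" by (metis ball_eq_empty empty_subsetI not_less)
  then have "ball x e \<inter> S \<noteq> {}" using assms(1) centre_in_ball by blast
  then obtain f where "f \<in> ball x e" "f \<in> frontier S"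
    using connected_Int_frontier[OF connected_ball] out by blast
  then show False using assms(2) infdist_le[of f "frontier S" x] by simp
qed

lemma convex_cone_ball_add_scaleR:
  fixes C :: "'a::real_normed_vector set"
  assumes C: "convex_cone C" and u: "ball u \<rho> \<subseteq> C" and c: "c \<in> C" and \<mu>: "0 < \<mu>"
  shows "ball (c + \<mu> *\<^sub>R u) (\<mu> * \<rho>) \<subseteq> C"
proof
  fix q assume q: "q \<in> ball (c + \<mu> *\<^sub>R u) (\<mu> * \<rho>)"
  define w where "w = u + inverse \<mu> *\<^sub>R (q - c - \<mu> *\<^sub>R u)"
  have "dist u w = inverse \<mu> * norm (q - c - \<mu> *\<^sub>R u)"
    using \<mu> by (simp add: w_def dist_norm)
  also have "norm (q - c - \<mu> *\<^sub>R u) = dist (c + \<mu> *\<^sub>R u) q"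
    by (simp add: dist_norm norm_minus_commute algebra_simps)
  also have "inverse \<mu> * dist (c + \<mu> *\<^sub>R u) q < inverse \<mu> * (\<mu> * \<rho>)"
    using q \<mu> by simp
  also have "\<dots> = \<rho>" using \<mu> by simp
  finally have "w \<in> C" using u by auto
  then have "\<mu> *\<^sub>R w \<in> C" using C \<mu> by (simp add: conic_mul convex_cone_def)
  then have "c + \<mu> *\<^sub>R w \<in> C" using C c convex_cone_add by blast
  moreover have "c + \<mu> *\<^sub>R w = q" using \<mu> by (simp add: w_def algebra_simps)
  ultimately show "q \<in> C" by simp
qed

lemma pointed_cone_ball_scaleR:
  assumes pc: "pointed_cone C" and y: "ball y \<epsilon> \<subseteq> C" and s: "1 \<le> s"
  shows "ball (s *\<^sub>R y) \<epsilon> \<subseteq> C"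
proof (cases "0 < \<epsilon>")
  case True
  then have "y \<in> C" using y centre_in_ball by blast
  then have "(s - 1) *\<^sub>R y \<in> C" using pointed_cone_scaleR[OF pc, of y "s - 1"] s by simp
  then show ?thesis
    using convex_cone_ball_add_scaleR[OF pointed_cone_convex_cone[OF pc] y, of "(s - 1) *\<^sub>R y" 1]
    by (simp add: algebra_simps)
qed (simp add: ball_empty)

lemma ray_crosses_frontier:
  fixes y :: "'a::real_normed_vector"
  assumes "y \<notin> S" "T *\<^sub>R y \<in> S" "1 \<le> T"
  obtains s where "1 \<le> s" "s *\<^sub>R y \<in> frontier S"
proof -
  obtain p where p: "p \<in> closed_segment y (T *\<^sub>R y)" "p \<in> frontier S"
    using connected_Int_frontier[OF connected_segment, of y "T *\<^sub>R y" S] assms(1,2) by auto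
  then obtain u where u: "0 \<le> u" "u \<le> 1" "p = (1 - u) *\<^sub>R y + u *\<^sub>R (T *\<^sub>R y)"
    unfolding closed_segment_def by blast
  have "0 \<le> u * (T - 1)" using u assms(3) by simp
  then have "1 \<le> 1 - u + u * T" by (simp add: algebra_simps)
  moreover have "p = (1 - u + u * T) *\<^sub>R y" using u by (simp add: algebra_simps)
  ultimately show ?thesis using that p(2) by blast
qed

lemma closed_conic_ray_direction:
  fixes C :: "'a::real_normed_vector set"
  assumes "closed C" "conic C" and ray: "\<And>t. t \<ge> 0 \<Longrightarrow> x + t *\<^sub>R d \<in> C"
  shows "d \<in> C"
proof -
  have "inverse (real (Suc k)) *\<^sub>R x + d \<in> C" for k
  proof -
    have "inverse (real (Suc k)) *\<^sub>R x + d = inverse (real (Suc k)) *\<^sub>R (x + real (Suc k) *\<^sub>R d)"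
      by (simp add: scaleR_add_right)
    then show ?thesis using assms(2) ray[of "real (Suc k)"] by (simp add: conic_mul)
  qed
  moreover have "(\<lambda>k. inverse (real (Suc k)) *\<^sub>R x + d) \<longlonglongrightarrow> 0 *\<^sub>R x + d"
    by (intro tendsto_intros LIMSEQ_inverse_real_of_nat)
  ultimately show ?thesis using closed_sequentially[OF assms(1)] by fastforce
qed

lemma frontier_supporting_unit_normal:
  fixes S :: "'a::euclidean_space set"
  assumes "convex S" "interior S \<noteq> {}" "x \<in> frontier S"
  obtains n where "norm n = 1" "\<And>y. y \<in> S \<Longrightarrow> n \<bullet> x \<le> n \<bullet> y"
proof -
  have "x \<in> closure S" "x \<notin> rel_interior S"
    using assms(3) rel_interior_nonempty_interior[OF assms(2)] by (auto simp: frontier_def)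
  then obtain a where a: "a \<noteq> 0" "\<And>y. y \<in> closure S \<Longrightarrow> a \<bullet> x \<le> a \<bullet> y"
    using supporting_hyperplane_relative_frontier[OF assms(1)] by blast
  show ?thesis
  proof (rule that[of "inverse (norm a) *\<^sub>R a"])
    show "norm (inverse (norm a) *\<^sub>R a) = 1" using a(1) by simp
    fix y assume "y \<in> S"
    then have "a \<bullet> x \<le> a \<bullet> y" using a(2) closure_subset by blast
    then show "(inverse (norm a) *\<^sub>R a) \<bullet> x \<le> (inverse (norm a) *\<^sub>R a) \<bullet> y"
      by (simp add: mult_left_mono)
  qed
qed

lemma inner_pos_of_interior:
  assumes "norm n = 1" "\<forall>c\<in>C. 0 \<le> n \<bullet> c" "u \<in> interior C"
  shows "0 < n \<bullet> u"
proof -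
  obtain r where r: "0 < r" "ball u r \<subseteq> C" using assms(3) mem_interior by blast
  then have "u - (r/2) *\<^sub>R n \<in> C" using assms(1) by (auto simp: dist_norm)
  then have "0 \<le> n \<bullet> (u - (r/2) *\<^sub>R n)" using assms(2) by blast
  then show ?thesis using assms(1) r(1) by (simp add: inner_diff_right dot_square_norm)
qed

lemma interior_not_subset_span_singleton:
  fixes S :: "'a::euclidean_space set"
  assumes "interior S \<noteq> {}" "DIM('a) \<ge> 2"
  shows "\<not> interior S \<subseteq> span {v}"
proof
  assume "interior S \<subseteq> span {v}"
  then have "dim (interior S) \<le> dim {v}" by (rule dim_mono)
  also have "dim {v} \<le> 1" by (simp add: dim_singleton)
  finally have "dim (interior S) \<le> 1" .
  moreover have "dim (interior S) = dim (UNIV :: 'a set)"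
    by (rule dim_openin) (auto simp: assms(1))
  ultimately show False using assms(2) by simp
qed

text \<open>For \<open>v \<notin> C\<close>, walk from an interior point \<open>u \<notin> span {v}\<close> of \<open>C\<close> in direction \<open>v\<close> until
  leaving \<open>C\<close>; a supporting hyperplane of \<open>C\<close> at the exit point \<open>c0\<close> passes through the origin and
  separates \<open>v\<close> from \<open>C\<close>. The choice of \<open>u\<close>, possible only in dimension at least 2, makes
  \<open>c0 \<noteq> 0\<close>.\<close>
lemma pointed_cone_face_separating:
  fixes C :: "'a::euclidean_space set"
  assumes pc: "pointed_cone C" and dim: "DIM('a) \<ge> 2" and v: "v \<notin> C"
  obtains n c0 where "\<forall>c\<in>C. 0 \<le> n \<bullet> c" "c0 \<in> C" "c0 \<noteq> 0" "n \<bullet> c0 = 0" "n \<bullet> v < 0"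
proof -
  obtain u where u: "u \<in> interior C" "u \<notin> span {v}"
    using interior_not_subset_span_singleton[OF pointed_cone_interior[OF pc] dim] by blast
  have uC: "u \<in> C" using u(1) interior_subset by blast
  obtain M where M: "0 \<le> M" "u + M *\<^sub>R v \<notin> C"
    using closed_conic_ray_direction[of C u v] v pointed_cone_closed[OF pc]
      pointed_cone_convex_cone[OF pc] by (auto simp: convex_cone_def)
  obtain c0 where c0: "c0 \<in> closed_segment u (u + M *\<^sub>R v)" "c0 \<in> frontier C"
    using connected_Int_frontier[OF connected_segment, of u "u + M *\<^sub>R v" C] uC M(2) by auto
  then obtain w where w: "0 \<le> w" "w \<le> 1" "c0 = (1 - w) *\<^sub>R u + w *\<^sub>R (u + M *\<^sub>R v)"
    unfolding closed_segment_def by blast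
  define t where "t = w * M"
  have t: "0 \<le> t" using w M by (simp add: t_def)
  have c0_eq: "c0 = u + t *\<^sub>R v" using w by (simp add: t_def algebra_simps)
  have c0C: "c0 \<in> C" using c0(2) pointed_cone_closed[OF pc] by (simp add: frontier_def)
  have "t \<noteq> 0" using c0(2) u(1) c0_eq by (auto simp: frontier_def)
  have "c0 \<noteq> 0"
  proof
    assume "c0 = 0"
    then have "u = (- t) *\<^sub>R v" using c0_eq by (simp add: eq_neg_iff_add_eq_0)
    moreover have "(- t) *\<^sub>R v \<in> span {v}" by (intro span_scale span_base) simp
    ultimately show False using u(2) by simp
  qed
  obtain n where n: "norm n = 1" "\<And>y. y \<in> C \<Longrightarrow> n \<bullet> c0 \<le> n \<bullet> y"
    using frontier_supporting_unit_normal[OF pointed_cone_convex[OF pc] pointed_cone_interior[OF pc] c0(2)]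
    by blast
  have "n \<bullet> c0 \<le> 0" using n(2)[OF pointed_cone_zero[OF pc]] by simp
  moreover have "n \<bullet> c0 \<le> 2 * (n \<bullet> c0)" using n(2)[OF pointed_cone_scaleR[OF pc c0C, of 2]] by simp
  ultimately have nc0: "n \<bullet> c0 = 0" by simp
  then have nC: "\<forall>c\<in>C. 0 \<le> n \<bullet> c" using n(2) by simp
  have "0 < n \<bullet> u" using inner_pos_of_interior[OF n(1) nC u(1)] .
  moreover have "0 = n \<bullet> u + t * (n \<bullet> v)" using nc0 c0_eq by (simp add: inner_add_right)
  ultimately have "t * (n \<bullet> v) < 0" by linarith
  then have "n \<bullet> v < 0" using t \<open>t \<noteq> 0\<close> by (simp add: mult_less_0_iff)
  then show ?thesis using that nC c0C \<open>c0 \<noteq> 0\<close> nc0 by blast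
qed

lemma pointed_cone_unit_norm_add_bound:
  fixes C :: "'a::euclidean_space set"
  assumes pc: "pointed_cone C"
  obtains m where "0 < m" "\<And>a b. a \<in> C \<Longrightarrow> norm a = 1 \<Longrightarrow> b \<in> C \<Longrightarrow> m \<le> norm (a + b)"
proof (cases "C \<inter> sphere 0 1 = {}")
  case True
  then have "1 \<le> norm (a + b)" if "a \<in> C" "norm a = 1" for a b :: 'a
    using that by auto
  with zero_less_one show ?thesis by (rule that)
next
  case False
  \<comment> \<open>minimise \<open>norm (a + b)\<close> over short \<open>b\<close>; for \<open>norm b > 2\<close>, \<open>norm (a + b) \<ge> 1\<close> anyway\<close>
  define K where "K = (C \<inter> sphere 0 1) \<times> (C \<inter> cball 0 2)"
  have "compact K" unfolding K_def using pointed_cone_closed[OF pc]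
    by (intro compact_Times closed_Int_compact compact_sphere compact_cball)
  moreover have "K \<noteq> {}" using False pointed_cone_zero[OF pc] unfolding K_def by auto
  moreover have "continuous_on K (\<lambda>z. norm (fst z + snd z))" by (intro continuous_intros)
  ultimately obtain z0 where z0: "z0 \<in> K" "\<And>z. z \<in> K \<Longrightarrow> norm (fst z0 + snd z0) \<le> norm (fst z + snd z)"
    using continuous_attains_inf[of K "\<lambda>z. norm (fst z + snd z)"] by blast
  define m where "m = min 1 (norm (fst z0 + snd z0))"
  have "fst z0 + snd z0 \<noteq> 0"
  proof
    assume "fst z0 + snd z0 = 0"
    then have "- fst z0 = snd z0" by (simp add: add_eq_0_iff)
    moreover have "fst z0 \<in> C" "snd z0 \<in> C" "norm (fst z0) = 1" using z0(1) unfolding K_def by auto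
    ultimately have "fst z0 = 0" and "norm (fst z0) = 1" using pointed_cone_uminus_eq_0[OF pc] by metis+
    then show False by simp
  qed
  then have "0 < m" by (simp add: m_def)
  moreover have "m \<le> norm (a + b)" if "a \<in> C" "norm a = 1" "b \<in> C" for a b
  proof (cases "norm b \<le> 2")
    case True
    then have "(a, b) \<in> K" using that unfolding K_def by auto
    from z0(2)[OF this] show ?thesis by (simp add: m_def)
  next
    case False
    have "norm b - norm a \<le> norm (a + b)" using norm_diff_ineq[of b a] by (simp add: add.commute)
    then show ?thesis using that(2) False by (simp add: m_def)
  qed
  ultimately show ?thesis by (rule that)
qed

lemma pointed_cone_norm_le_norm_add:
  fixes C :: "'a::euclidean_space set"
  assumes pc: "pointed_cone C"
  obtains m where "0 < m" "\<And>a b. a \<in> C \<Longrightarrow> b \<in> C \<Longrightarrow> m * norm a \<le> norm (a + b)"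
proof -
  obtain m where m: "0 < m" "\<And>a b. a \<in> C \<Longrightarrow> norm a = 1 \<Longrightarrow> b \<in> C \<Longrightarrow> m \<le> norm (a + b)"
    using pointed_cone_unit_norm_add_bound[OF pc] by blast
  have "m * norm a \<le> norm (a + b)" if a: "a \<in> C" and b: "b \<in> C" for a b
  proof (cases "a = 0")
    case False
    define s where "s = inverse (norm a)"
    have s: "0 < s" using False by (simp add: s_def)
    have "m \<le> norm (s *\<^sub>R a + s *\<^sub>R b)"
      using m(2) pointed_cone_scaleR[OF pc a, of s] pointed_cone_scaleR[OF pc b, of s] s False
      by (simp add: s_def)
    also have "\<dots> = s * norm (a + b)" using s by (simp flip: scaleR_add_right)
    finally have "m * norm a \<le> s * norm (a + b) * norm a" using False by simp
    also have "\<dots> = norm (a + b)" using False by (simp add: s_def)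
    finally show ?thesis .
  qed simp
  then show ?thesis using m(1) that by blast
qed

section \<open>Minkowski sums, translates and recession cones\<close>

lemma closed_minkowski_sum_in_pointed_cone:
  fixes C A B :: "'a::euclidean_space set"
  assumes pc: "pointed_cone C" and "closed A" "closed B" "A \<subseteq> C" "B \<subseteq> C"
  shows "closed (minkowski_sum A B)"
proof -
  obtain m where m: "0 < m" "\<And>a b. a \<in> C \<Longrightarrow> b \<in> C \<Longrightarrow> m * norm a \<le> norm (a + b)"
    using pointed_cone_norm_le_norm_add[OF pc] by blast
  \<comment> \<open>near a point \<open>x\<close>, the sum agrees with a sum of two compact pieces\<close>
  have "x \<in> minkowski_sum A B" if x: "\<forall>e>0. \<exists>y\<in>minkowski_sum A B. dist y x < e" for x
  proof -
    define r where "r = (norm x + 1) / m"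
    define K where "K = {a + b | a b. a \<in> A \<inter> cball 0 r \<and> b \<in> B \<inter> cball 0 (r + norm x + 1)}"
    have "compact K" unfolding K_def
      using assms(2,3) by (intro compact_sums) (auto intro: closed_Int_compact)
    moreover have "\<exists>y\<in>K. dist y x < e" if "0 < e" for e
    proof -
      obtain y where y: "y \<in> minkowski_sum A B" "dist y x < min e 1"
        using x \<open>0 < e\<close> by (meson less_numeral_extra(1) min_less_iff_conj)
      then obtain a b where ab: "a \<in> A" "b \<in> B" "y = a + b" unfolding minkowski_sum_def by blast
      have ny: "norm y \<le> norm x + 1" using y(2) norm_triangle_ineq2[of y x] by (simp add: dist_norm)
      have "m * norm a \<le> norm y" using m(2)[of a b] ab assms(4,5) by auto
      then have na: "norm a \<le> r" using ny m(1) by (simp add: r_def field_simps)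
      have "norm b \<le> norm y + norm a" using ab norm_triangle_ineq4[of y a] by simp
      then have "norm b \<le> r + norm x + 1" using na ny by linarith
      then have "y \<in> K" unfolding K_def using ab na by auto
      then show ?thesis using y(2) by auto
    qed
    ultimately have "x \<in> K" using closed_approachable[OF compact_imp_closed] by blast
    then show ?thesis unfolding K_def minkowski_sum_def by blast
  qed
  then have "closure (minkowski_sum A B) \<subseteq> minkowski_sum A B" by (auto simp: closure_approachable)
  then show ?thesis using closure_subset_eq by blast
qed

lemma convex_minkowski_sum:
  assumes "convex A" "convex B"
  shows "convex (minkowski_sum A B)"
proof -
  have "minkowski_sum A B = (\<Union>x\<in>A. \<Union>y\<in>B. {x + y})" unfolding minkowski_sum_def by auto
  then show ?thesis using convex_sums[OF assms] by simp
qed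

lemma minkowski_sum_subset_convex_cone:
  "convex_cone C \<Longrightarrow> A \<subseteq> C \<Longrightarrow> B \<subseteq> C \<Longrightarrow> minkowski_sum A B \<subseteq> C"
  unfolding minkowski_sum_def using convex_cone_add by blast

lemma zero_notin_minkowski_sum:
  assumes "pointed_cone C" "A \<subseteq> C" "B \<subseteq> C" "0 \<notin> A"
  shows "0 \<notin> minkowski_sum A B"
proof
  assume "0 \<in> minkowski_sum A B"
  then obtain a b where ab: "a \<in> A" "b \<in> B" "a + b = 0" unfolding minkowski_sum_def by auto
  then have "b = - a" by (simp add: add_eq_0_iff)
  then have "- a \<in> C" using ab(2) assms(3) by auto
  then have "a = 0" using pointed_cone_uminus_eq_0[OF assms(1)] ab(1) assms(2) by blast
  then show False using ab(1) assms(4) by simp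
qed

lemma translate_translate: "translate a (translate b A) = translate (a + b) A"
  unfolding translate_def by (simp add: image_image add.assoc)

lemma translate_0 [simp]: "translate 0 A = A"
  by (simp add: translate_def)

lemma translate_subset_minkowski_sum: "b \<in> B \<Longrightarrow> translate b A \<subseteq> minkowski_sum A B"
  unfolding translate_def minkowski_sum_def by (auto simp: add.commute)

lemma unbounded_minkowski_sum:
  fixes A B :: "'a::real_normed_vector set"
  assumes "b \<in> B" "\<not> bounded A"
  shows "\<not> bounded (minkowski_sum A B)"
proof
  assume "bounded (minkowski_sum A B)"
  then have "bounded (translate (- b) (translate b A))"
    using translate_subset_minkowski_sum[OF assms(1)] bounded_subset bounded_translation
    unfolding translate_def by metis
  then show False using assms(2) by (simp add: translate_translate)
qed

lemma interior_minkowski_sum_nonempty: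
  fixes A B :: "'a::real_normed_vector set"
  assumes "interior A \<noteq> {}" "b \<in> B"
  shows "interior (minkowski_sum A B) \<noteq> {}"
proof -
  have "interior (translate b A) \<subseteq> interior (minkowski_sum A B)"
    using translate_subset_minkowski_sum[OF assms(2)] by (rule interior_mono)
  moreover have "interior (translate b A) \<noteq> {}"
    using assms(1) by (simp add: translate_def interior_translation)
  ultimately show ?thesis by blast
qed

lemma translate_subset_convex_cone:
  "convex_cone C \<Longrightarrow> z \<in> C \<Longrightarrow> A \<subseteq> C \<Longrightarrow> translate z A \<subseteq> C"
  unfolding translate_def using convex_cone_add by blast

lemma minkowski_sum_translate:
  "minkowski_sum (translate z1 A1) (translate z2 A2) = translate (z1 + z2) (minkowski_sum A1 A2)"
proof (intro set_eqI iffI)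
  fix x assume "x \<in> minkowski_sum (translate z1 A1) (translate z2 A2)"
  then obtain a1 a2 where "a1 \<in> A1" "a2 \<in> A2" "x = (z1 + z2) + (a1 + a2)"
    unfolding minkowski_sum_def translate_def by (auto simp: algebra_simps)
  then show "x \<in> translate (z1 + z2) (minkowski_sum A1 A2)"
    unfolding minkowski_sum_def translate_def by blast
next
  fix x assume "x \<in> translate (z1 + z2) (minkowski_sum A1 A2)"
  then obtain a1 a2 where "a1 \<in> A1" "a2 \<in> A2" "x = (z1 + a1) + (z2 + a2)"
    unfolding minkowski_sum_def translate_def by (auto simp: algebra_simps)
  then show "x \<in> minkowski_sum (translate z1 A1) (translate z2 A2)"
    unfolding minkowski_sum_def translate_def by blast
qed

lemma rec_cone_translate: "rec_cone (translate z A) = rec_cone A"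
proof -
  have "z + x \<in> translate z A \<longleftrightarrow> x \<in> A" for x by (auto simp: translate_def)
  then show ?thesis unfolding rec_cone_def translate_def by (simp add: add.assoc)
qed

lemma rec_cone_add:
  assumes "c \<in> rec_cone A" "a \<in> A"
  shows "a + c \<in> A"
proof -
  have "a + 1 *\<^sub>R c \<in> A" using assms unfolding rec_cone_def by (blast intro: zero_le_one)
  then show ?thesis by simp
qed

lemma rec_cone_subset_minkowski_sum: "rec_cone E \<subseteq> rec_cone (minkowski_sum E F)"
proof
  fix c assume c: "c \<in> rec_cone E"
  have "a + b + t *\<^sub>R c \<in> minkowski_sum E F" if "a \<in> E" "b \<in> F" "0 \<le> t" for a b t
  proof -
    have "a + t *\<^sub>R c \<in> E" using c that unfolding rec_cone_def by blast
    moreover have "a + b + t *\<^sub>R c = (a + t *\<^sub>R c) + b" by (simp add: algebra_simps)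
    ultimately show ?thesis using that(2) unfolding minkowski_sum_def by blast
  qed
  then show "c \<in> rec_cone (minkowski_sum E F)" unfolding rec_cone_def minkowski_sum_def by blast
qed

lemma pseudo_cone_minkowski_sum:
  fixes C E F :: "'a::euclidean_space set"
  assumes pc: "pointed_cone C" and E: "pseudo_cone C E" "E \<subseteq> C" and F: "pseudo_cone C F" "F \<subseteq> C"
  shows "pseudo_cone C (minkowski_sum E F)"
proof -
  let ?S = "minkowski_sum E F"
  have S_ne: "?S \<noteq> {}" using E F unfolding pseudo_cone_def minkowski_sum_def by blast
  have SC: "?S \<subseteq> C"
    using minkowski_sum_subset_convex_cone[OF pointed_cone_convex_cone[OF pc] E(2) F(2)] .
  have "l *\<^sub>R x \<in> ?S" if "x \<in> ?S" "1 \<le> l" for x l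
  proof -
    obtain a b where "a \<in> E" "b \<in> F" "x = a + b" using \<open>x \<in> ?S\<close> unfolding minkowski_sum_def by blast
    moreover have "l *\<^sub>R a \<in> E" "l *\<^sub>R b \<in> F" using E F \<open>a \<in> E\<close> \<open>b \<in> F\<close> \<open>1 \<le> l\<close>
      unfolding pseudo_cone_def by blast+
    ultimately show ?thesis unfolding minkowski_sum_def by (auto simp: scaleR_add_right)
  qed
  moreover have "rec_cone ?S \<subseteq> C"
  proof
    fix d assume d: "d \<in> rec_cone ?S"
    obtain x where "x \<in> ?S" using S_ne by blast
    then have "x + t *\<^sub>R d \<in> C" if "0 \<le> t" for t using d SC that unfolding rec_cone_def by blast
    then show "d \<in> C"
      using closed_conic_ray_direction pointed_cone_closed[OF pc] pointed_cone_convex_cone[OF pc]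
      by (auto simp: convex_cone_def)
  qed
  moreover have "C \<subseteq> rec_cone ?S" using E(1) rec_cone_subset_minkowski_sum[of E F]
    unfolding pseudo_cone_def by blast
  moreover have "closed ?S" using closed_minkowski_sum_in_pointed_cone[OF pc _ _ E(2) F(2)] E(1) F(1)
    unfolding pseudo_cone_def by blast
  moreover have "0 \<notin> ?S" using zero_notin_minkowski_sum[OF pc E(2) F(2)] E(1)
    unfolding pseudo_cone_def by blast
  ultimately show ?thesis using S_ne E(1) F(1) convex_minkowski_sum
    unfolding pseudo_cone_def by blast
qed

section \<open>Asymptotic sets\<close>

lemma asymptotic_set_subset: "asymptotic_set C A \<Longrightarrow> A \<subseteq> C"
  by (simp add: asymptotic_set_def)

lemma asymptotic_set_nonempty: "asymptotic_set C A \<Longrightarrow> A \<noteq> {}"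
  by (auto simp: asymptotic_set_def)

text \<open>Far from the origin, a point whose \<open>\<epsilon>\<close>-ball lies in \<open>C\<close> belongs to \<open>A\<close>: otherwise the ray
  through it, which eventually enters \<open>A\<close>, would cross the frontier of \<open>A\<close> at a far point that is
  still \<open>\<epsilon>\<close>-deep inside \<open>C\<close>.\<close>
lemma asymptotic_set_deep_points:
  fixes C A :: "'a::euclidean_space set"
  assumes pc: "pointed_cone C" and as: "asymptotic_set C A" and rec: "C \<subseteq> rec_cone A"
    and \<epsilon>: "0 < \<epsilon>"
  obtains R where "\<And>y. R \<le> norm y \<Longrightarrow> ball y \<epsilon> \<subseteq> C \<Longrightarrow> y \<in> A"
proof -
  obtain R where R: "\<And>x. x \<in> frontier A \<Longrightarrow> R \<le> norm x \<Longrightarrow> infdist x (frontier C) < \<epsilon>"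
    using as \<epsilon> unfolding asymptotic_set_def by blast
  obtain a where a: "a \<in> A" using asymptotic_set_nonempty[OF as] by blast
  have "y \<in> A" if y: "R \<le> norm y" "ball y \<epsilon> \<subseteq> C" for y
  proof (rule ccontr)
    assume y_out: "y \<notin> A"
    define T where "T = norm a / \<epsilon> + 1"
    have T: "1 \<le> T" using \<epsilon> by (simp add: T_def)
    have "dist y (y - inverse T *\<^sub>R a) = norm a / T" using T by (simp add: dist_norm divide_inverse mult.commute)
    also have "\<dots> < \<epsilon>"
    proof -
      have "norm a < \<epsilon> * T" using \<epsilon> by (simp add: T_def algebra_simps)
      then show ?thesis using T by (simp add: divide_less_eq mult.commute)
    qed
    finally have "y - inverse T *\<^sub>R a \<in> C" using y(2) by auto
    then have "T *\<^sub>R (y - inverse T *\<^sub>R a) \<in> C" using pointed_cone_scaleR[OF pc] T by simp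
    then have "T *\<^sub>R y - a \<in> C" using T by (simp add: algebra_simps)
    then have "a + (T *\<^sub>R y - a) \<in> A" using rec_cone_add rec a by blast
    then obtain s where s: "1 \<le> s" "s *\<^sub>R y \<in> frontier A"
      using ray_crosses_frontier[OF y_out _ T] by auto
    have "ball (s *\<^sub>R y) \<epsilon> \<subseteq> C" using pointed_cone_ball_scaleR[OF pc y(2) s(1)] .
    then have "\<epsilon> \<le> infdist (s *\<^sub>R y) (frontier C)"
      using infdist_frontier_ge frontier_pointed_cone_nonempty[OF pc] by blast
    moreover have "R \<le> norm (s *\<^sub>R y)"
      using s(1) y(1) mult_right_mono[of 1 s "norm y"] by simp
    ultimately show False using R[OF s(2)] by linarith
  qed
  then show ?thesis using that by blast
qed

lemma asymptotic_set_far_translates: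
  fixes C A :: "'a::euclidean_space set"
  assumes pc: "pointed_cone C" and as: "asymptotic_set C A" and rec: "C \<subseteq> rec_cone A"
    and u: "ball u \<rho> \<subseteq> C" "0 < \<rho>" and \<mu>: "0 < \<mu>"
  obtains R where "\<And>c. c \<in> C \<Longrightarrow> R \<le> norm c \<Longrightarrow> c + \<mu> *\<^sub>R u \<in> A"
proof -
  obtain R where R: "\<And>y. R \<le> norm y \<Longrightarrow> ball y (\<mu> * \<rho>) \<subseteq> C \<Longrightarrow> y \<in> A"
    using asymptotic_set_deep_points[OF pc as rec, of "\<mu> * \<rho>"] u(2) \<mu> by auto
  have "c + \<mu> *\<^sub>R u \<in> A" if c: "c \<in> C" "R + \<mu> * norm u \<le> norm c" for c
  proof (rule R)
    have "norm c - norm (\<mu> *\<^sub>R u) \<le> norm (c + \<mu> *\<^sub>R u)"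
      using norm_diff_ineq[of c "\<mu> *\<^sub>R u"] by simp
    then show "R \<le> norm (c + \<mu> *\<^sub>R u)" using c(2) \<mu> by simp
    show "ball (c + \<mu> *\<^sub>R u) (\<mu> * \<rho>) \<subseteq> C"
      using convex_cone_ball_add_scaleR[OF pointed_cone_convex_cone[OF pc] u(1) c(1) \<mu>] .
  qed
  then show ?thesis using that by blast
qed

lemma asymptotic_set_inner_less:
  fixes C A :: "'a::euclidean_space set"
  assumes pc: "pointed_cone C" and as: "asymptotic_set C A" and rec: "C \<subseteq> rec_cone A"
    and c0: "c0 \<in> C" "c0 \<noteq> 0" "n \<bullet> c0 = 0" and \<delta>: "0 < \<delta>"
  obtains y where "y \<in> A" "n \<bullet> y < \<delta>"
proof -
  obtain u \<rho> where u: "0 < \<rho>" "ball u \<rho> \<subseteq> C" using pointed_cone_interior_ball[OF pc] .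
  define \<mu> where "\<mu> = \<delta> / (norm n * norm u + 1)"
  have \<mu>: "0 < \<mu>" using \<delta> by (simp add: \<mu>_def add_nonneg_pos)
  obtain R where R: "\<And>c. c \<in> C \<Longrightarrow> R \<le> norm c \<Longrightarrow> c + \<mu> *\<^sub>R u \<in> A"
    using asymptotic_set_far_translates[OF pc as rec u(2,1) \<mu>] by blast
  define c where "c = (max R 0 / norm c0) *\<^sub>R c0"
  have "c \<in> C" using pointed_cone_scaleR[OF pc c0(1)] by (simp add: c_def)
  moreover have "R \<le> norm c" using c0(2) by (simp add: c_def)
  ultimately have "c + \<mu> *\<^sub>R u \<in> A" by (rule R)
  moreover have "n \<bullet> (c + \<mu> *\<^sub>R u) < \<delta>"
  proof -
    have "n \<bullet> (c + \<mu> *\<^sub>R u) = \<mu> * (n \<bullet> u)" using c0(3) by (simp add: c_def inner_add_right)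
    also have "\<dots> \<le> \<mu> * (norm n * norm u)" using \<mu> norm_cauchy_schwarz by (simp add: mult_left_mono)
    also have "\<dots> < \<mu> * (norm n * norm u + 1)" using \<mu> by simp
    also have "\<dots> = \<delta>"
    proof -
      have "0 < norm n * norm u + 1" by (simp add: add_nonneg_pos)
      then show ?thesis by (simp add: \<mu>_def)
    qed
    finally show ?thesis .
  qed
  ultimately show ?thesis using that by blast
qed

text \<open>Rescale \<open>x\<close> to a fixed large norm and push it slightly into \<open>C\<close>: the result lies in \<open>A\<close>,
  hence in the half-space.\<close>
lemma asymptotic_set_halfspace_bound:
  fixes C A :: "'a::euclidean_space set"
  assumes pc: "pointed_cone C" and as: "asymptotic_set C A" and rec: "C \<subseteq> rec_cone A"
    and e: "0 < e"
  obtains K where "\<And>n x. norm n = 1 \<Longrightarrow> (\<forall>y\<in>A. e \<le> n \<bullet> y) \<Longrightarrow> x \<in> C \<Longrightarrow> norm x \<le> K * (n \<bullet> x)"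
proof -
  obtain u \<rho> where u: "0 < \<rho>" "ball u \<rho> \<subseteq> C" using pointed_cone_interior_ball[OF pc] .
  define \<mu> where "\<mu> = e / (2 * (norm u + 1))"
  have \<mu>: "0 < \<mu>" using e by (simp add: \<mu>_def add_nonneg_pos)
  have \<mu>u: "\<mu> * norm u < e / 2"
  proof -
    have "\<mu> * norm u < \<mu> * (norm u + 1)" using \<mu> by simp
    also have "\<dots> = e / 2"
    proof -
      have "0 < norm u + 1" by (simp add: add_nonneg_pos)
      then show ?thesis by (simp add: \<mu>_def field_simps)
    qed
    finally show ?thesis .
  qed
  obtain R where R: "\<And>c. c \<in> C \<Longrightarrow> R \<le> norm c \<Longrightarrow> c + \<mu> *\<^sub>R u \<in> A"
    using asymptotic_set_far_translates[OF pc as rec u(2,1) \<mu>] by blast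
  define T where "T = max R 1"
  have "norm x \<le> (2 * T / e) * (n \<bullet> x)"
    if n: "norm n = 1" "\<forall>y\<in>A. e \<le> n \<bullet> y" and x: "x \<in> C" for n x
  proof (cases "x = 0")
    case False
    define c where "c = (T / norm x) *\<^sub>R x"
    have "c \<in> C" using pointed_cone_scaleR[OF pc x] by (simp add: c_def T_def)
    moreover have "R \<le> norm c" using False by (simp add: c_def T_def)
    ultimately have "e \<le> n \<bullet> (c + \<mu> *\<^sub>R u)" using R n(2) by blast
    also have "\<dots> = (T / norm x) * (n \<bullet> x) + \<mu> * (n \<bullet> u)" by (simp add: c_def inner_add_right)
    also have "\<mu> * (n \<bullet> u) \<le> \<mu> * norm u"
      using \<mu> norm_cauchy_schwarz[of n u] n(1) by (simp add: mult_left_mono)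
    finally have "e \<le> (T / norm x) * (n \<bullet> x) + \<mu> * norm u" by simp
    then have "e / 2 < (T / norm x) * (n \<bullet> x)" using \<mu>u by linarith
    then show ?thesis using False e by (simp add: field_simps)
  qed simp
  then show ?thesis using that by blast
qed

text \<open>The normal supports \<open>A1\<close> at \<open>y1\<close> and \<open>A2\<close> at \<open>y2\<close>, where \<open>x = y1 + y2\<close>, and
  \<open>n \<bullet> y1 + n \<bullet> y2 = n \<bullet> x \<ge> \<epsilon>/2\<close> by the depth of \<open>x\<close> in \<open>C\<close>.\<close>
lemma minkowski_sum_deep_frontier_normal:
  fixes C A1 A2 :: "'a::euclidean_space set"
  assumes pc: "pointed_cone C"
    and as1: "asymptotic_set C A1" and rec1: "C \<subseteq> rec_cone A1" and as2: "asymptotic_set C A2"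
    and x: "x \<in> frontier (minkowski_sum A1 A2)" "ball x \<epsilon> \<subseteq> C" and \<epsilon>: "0 < \<epsilon>"
  obtains n where "norm n = 1" "\<epsilon>/2 \<le> n \<bullet> x" "\<And>y. y \<in> minkowski_sum A1 A2 \<Longrightarrow> n \<bullet> x \<le> n \<bullet> y"
    "(\<forall>y\<in>A1. \<epsilon>/4 \<le> n \<bullet> y) \<or> (\<forall>y\<in>A2. \<epsilon>/4 \<le> n \<bullet> y)"
proof -
  let ?S = "minkowski_sum A1 A2"
  have A1C: "A1 \<subseteq> C" and A2C: "A2 \<subseteq> C" using as1 as2 by (auto dest: asymptotic_set_subset)
  have "closed ?S" using closed_minkowski_sum_in_pointed_cone[OF pc _ _ A1C A2C] as1 as2
    by (simp add: asymptotic_set_def)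
  then have "x \<in> ?S" using x(1) by (simp add: frontier_def)
  then obtain y1 y2 where y: "y1 \<in> A1" "y2 \<in> A2" "x = y1 + y2" unfolding minkowski_sum_def by blast
  have "convex ?S" using as1 as2 by (simp add: asymptotic_set_def convex_minkowski_sum)
  moreover have "interior ?S \<noteq> {}"
    using as1 y(2) by (simp add: asymptotic_set_def interior_minkowski_sum_nonempty)
  ultimately obtain n where n: "norm n = 1" "\<And>y. y \<in> ?S \<Longrightarrow> n \<bullet> x \<le> n \<bullet> y"
    using frontier_supporting_unit_normal x(1) by blast
  have min1: "n \<bullet> y1 \<le> n \<bullet> y" if "y \<in> A1" for y
    using n(2)[of "y + y2"] that y unfolding minkowski_sum_def by (auto simp: inner_add_right)
  have min2: "n \<bullet> y2 \<le> n \<bullet> y" if "y \<in> A2" for y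
    using n(2)[of "y1 + y"] that y unfolding minkowski_sum_def by (auto simp: inner_add_right)
  have "x - (\<epsilon>/2) *\<^sub>R n \<in> C" using x(2) n(1) \<epsilon> by (auto simp: dist_norm)
  then have "y1 + (x - (\<epsilon>/2) *\<^sub>R n) \<in> A1" using rec_cone_add rec1 y(1) by blast
  then have "n \<bullet> y1 \<le> n \<bullet> y1 + (n \<bullet> x - (\<epsilon>/2) * (n \<bullet> n))"
    using min1[OF \<open>y1 + (x - (\<epsilon>/2) *\<^sub>R n) \<in> A1\<close>] by (simp add: inner_add_right inner_diff_right)
  then have nx: "\<epsilon>/2 \<le> n \<bullet> x" using n(1) by (simp add: dot_square_norm)
  then have "\<epsilon>/4 \<le> n \<bullet> y1 \<or> \<epsilon>/4 \<le> n \<bullet> y2" using y(3) by (simp add: inner_add_right) linarith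
  then have "(\<forall>y\<in>A1. \<epsilon>/4 \<le> n \<bullet> y) \<or> (\<forall>y\<in>A2. \<epsilon>/4 \<le> n \<bullet> y)"
    using min1 min2 order_trans by blast
  then show ?thesis using that n nx by blast
qed

text \<open>If a far frontier point \<open>x\<close> of the sum were deep in \<open>C\<close>, the normal above would put one summand
  into a half-space \<open>n \<bullet> y \<ge> \<epsilon>/4\<close>; then \<open>asymptotic_set_halfspace_bound\<close> bounds \<open>norm x\<close> by a
  multiple of \<open>n \<bullet> x \<le> n \<bullet> (a1 + a2)\<close>.\<close>
lemma minkowski_sum_frontier_approaches_cone_frontier:
  fixes C A1 A2 :: "'a::euclidean_space set"
  assumes pc: "pointed_cone C"
    and as1: "asymptotic_set C A1" and rec1: "C \<subseteq> rec_cone A1"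
    and as2: "asymptotic_set C A2" and rec2: "C \<subseteq> rec_cone A2"
    and \<epsilon>: "0 < \<epsilon>"
  obtains R where "\<And>x. x \<in> frontier (minkowski_sum A1 A2) \<Longrightarrow> R \<le> norm x \<Longrightarrow> infdist x (frontier C) < \<epsilon>"
proof -
  obtain a1 a2 where a: "a1 \<in> A1" "a2 \<in> A2" using as1 as2 by (auto dest!: asymptotic_set_nonempty)
  define B where "B = norm (a1 + a2)"
  obtain K1 where K1: "\<And>n x. norm n = 1 \<Longrightarrow> (\<forall>y\<in>A1. \<epsilon>/4 \<le> n \<bullet> y) \<Longrightarrow> x \<in> C \<Longrightarrow> norm x \<le> K1 * (n \<bullet> x)"
    using asymptotic_set_halfspace_bound[OF pc as1 rec1, of "\<epsilon>/4"] \<epsilon> by auto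
  obtain K2 where K2: "\<And>n x. norm n = 1 \<Longrightarrow> (\<forall>y\<in>A2. \<epsilon>/4 \<le> n \<bullet> y) \<Longrightarrow> x \<in> C \<Longrightarrow> norm x \<le> K2 * (n \<bullet> x)"
    using asymptotic_set_halfspace_bound[OF pc as2 rec2, of "\<epsilon>/4"] \<epsilon> by auto
  have "infdist x (frontier C) < \<epsilon>"
    if x: "x \<in> frontier (minkowski_sum A1 A2)" "(\<bar>K1\<bar> + \<bar>K2\<bar>) * B + 1 \<le> norm x" for x
  proof (rule ccontr)
    assume "\<not> infdist x (frontier C) < \<epsilon>"
    moreover have "minkowski_sum A1 A2 \<subseteq> C"
      using as1 as2 minkowski_sum_subset_convex_cone[OF pointed_cone_convex_cone[OF pc]]
      by (simp add: asymptotic_set_subset)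
    then have "x \<in> C"
      using x(1) closure_minimal[OF _ pointed_cone_closed[OF pc]] by (auto simp: frontier_def)
    ultimately have deep: "ball x \<epsilon> \<subseteq> C" using ball_subset_of_infdist_frontier by force
    obtain n where n: "norm n = 1" "\<epsilon>/2 \<le> n \<bullet> x" "\<And>y. y \<in> minkowski_sum A1 A2 \<Longrightarrow> n \<bullet> x \<le> n \<bullet> y"
      and half: "(\<forall>y\<in>A1. \<epsilon>/4 \<le> n \<bullet> y) \<or> (\<forall>y\<in>A2. \<epsilon>/4 \<le> n \<bullet> y)"
      using minkowski_sum_deep_frontier_normal[OF pc as1 rec1 as2 x(1) deep \<epsilon>] by blast
    have "a1 + a2 \<in> minkowski_sum A1 A2" using a unfolding minkowski_sum_def by blast
    then have "n \<bullet> x \<le> n \<bullet> (a1 + a2)" by (rule n(3))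
    also have "\<dots> \<le> B" using norm_cauchy_schwarz[of n "a1 + a2"] n(1) by (simp add: B_def)
    finally have "n \<bullet> x \<le> B" .
    have bound: "K * (n \<bullet> x) \<le> \<bar>K\<bar> * B" for K
    proof -
      have "K * (n \<bullet> x) \<le> \<bar>K\<bar> * (n \<bullet> x)" using n(2) \<epsilon> by (intro mult_right_mono) auto
      also have "\<dots> \<le> \<bar>K\<bar> * B" using \<open>n \<bullet> x \<le> B\<close> by (intro mult_left_mono) auto
      finally show ?thesis .
    qed
    have "norm x \<le> \<bar>K1\<bar> * B \<or> norm x \<le> \<bar>K2\<bar> * B"
      using half K1[OF n(1) _ \<open>x \<in> C\<close>] K2[OF n(1) _ \<open>x \<in> C\<close>] bound order_trans by blast
    moreover have "0 \<le> \<bar>K1\<bar> * B" "0 \<le> \<bar>K2\<bar> * B" by (simp_all add: B_def)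
    moreover have "(\<bar>K1\<bar> + \<bar>K2\<bar>) * B = \<bar>K1\<bar> * B + \<bar>K2\<bar> * B" by (simp add: distrib_right)
    ultimately show False using x(2) by linarith
  qed
  then show ?thesis using that by blast
qed

lemma asymptotic_set_minkowski_sum:
  fixes C A1 A2 :: "'a::euclidean_space set"
  assumes pc: "pointed_cone C"
    and as1: "asymptotic_set C A1" and rec1: "C \<subseteq> rec_cone A1"
    and as2: "asymptotic_set C A2" and rec2: "C \<subseteq> rec_cone A2"
  shows "asymptotic_set C (minkowski_sum A1 A2)"
proof -
  have A1C: "A1 \<subseteq> C" and A2C: "A2 \<subseteq> C" using as1 as2 by (auto dest: asymptotic_set_subset)
  obtain a1 a2 where a: "a1 \<in> A1" "a2 \<in> A2" using as1 as2 by (auto dest!: asymptotic_set_nonempty)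
  have "\<exists>R. \<forall>x\<in>frontier (minkowski_sum A1 A2). R \<le> norm x \<longrightarrow> infdist x (frontier C) < \<epsilon>"
    if "0 < \<epsilon>" for \<epsilon>
    using minkowski_sum_frontier_approaches_cone_frontier[OF pc as1 rec1 as2 rec2 that] by metis
  moreover have "closed (minkowski_sum A1 A2)"
    using closed_minkowski_sum_in_pointed_cone[OF pc _ _ A1C A2C] as1 as2 by (simp add: asymptotic_set_def)
  moreover have "minkowski_sum A1 A2 \<subseteq> C"
    using minkowski_sum_subset_convex_cone[OF pointed_cone_convex_cone[OF pc] A1C A2C] .
  moreover have "0 \<notin> minkowski_sum A1 A2"
    using zero_notin_minkowski_sum[OF pc A1C A2C] as1 by (simp add: asymptotic_set_def)
  ultimately show ?thesis
    using as1 as2 a unbounded_minkowski_sum[OF a(2)] interior_minkowski_sum_nonempty[OF _ a(2)]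
    by (simp add: asymptotic_set_def convex_minkowski_sum)
qed

lemma asymptotic_set_translate_not_subset:
  fixes C A :: "'a::euclidean_space set"
  assumes pc: "pointed_cone C" and dim: "DIM('a) \<ge> 2"
    and as: "asymptotic_set C A" and rec: "C \<subseteq> rec_cone A" and v: "v \<notin> C"
  shows "\<not> translate v A \<subseteq> C"
proof
  assume sub: "translate v A \<subseteq> C"
  obtain n c0 where n: "\<forall>c\<in>C. 0 \<le> n \<bullet> c" "c0 \<in> C" "c0 \<noteq> 0" "n \<bullet> c0 = 0" "n \<bullet> v < 0"
    using pointed_cone_face_separating[OF pc dim v] by blast
  obtain y where y: "y \<in> A" "n \<bullet> y < - (n \<bullet> v)"
    using asymptotic_set_inner_less[OF pc as rec n(2-4), of "- (n \<bullet> v)"] n(5) by auto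
  have "v + y \<in> C" using sub y(1) unfolding translate_def by blast
  then show False using n(1) y(2) by (fastforce simp: inner_add_right)
qed

lemma asymptotic_set_translate_eq_imp_0:
  fixes C A B :: "'a::euclidean_space set"
  assumes pc: "pointed_cone C" and dim: "DIM('a) \<ge> 2"
    and asA: "asymptotic_set C A" and recA: "C \<subseteq> rec_cone A"
    and asB: "asymptotic_set C B" and recB: "C \<subseteq> rec_cone B"
    and eq: "translate v A = B"
  shows "v = 0"
proof (rule ccontr)
  assume "v \<noteq> 0"
  show False
  proof (cases "v \<in> C")
    case False
    then show False
      using asymptotic_set_translate_not_subset[OF pc dim asA recA] eq asymptotic_set_subset[OF asB] by blast
  next
    case True
    then have "- v \<notin> C" using pointed_cone_uminus_eq_0[OF pc] \<open>v \<noteq> 0\<close> by blast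
    moreover have "translate (- v) B = A" using eq by (auto simp: translate_translate)
    ultimately show False
      using asymptotic_set_translate_not_subset[OF pc dim asB recB] asymptotic_set_subset[OF asA] by blast
  qed
qed

lemma starting_point_translate:
  fixes C A :: "'a::euclidean_space set"
  assumes pc: "pointed_cone C" and dim: "DIM('a) \<ge> 2"
    and z: "z \<in> C" and as: "asymptotic_set C A" and rec: "rec_cone (translate z A) = C"
  shows "starting_point C (translate z A) = z"
  unfolding starting_point_def
proof (rule the_equality)
  show "z \<in> C \<and> (\<exists>A'. asymptotic_set C A' \<and> translate z A = translate z A')" using z as by blast
next
  fix z' assume "z' \<in> C \<and> (\<exists>A'. asymptotic_set C A' \<and> translate z A = translate z' A')"
  then obtain A' where A': "asymptotic_set C A'" "translate z A = translate z' A'" by blast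
  have "rec_cone A = C" "rec_cone A' = C" using rec A'(2) by (metis rec_cone_translate)+
  moreover have "translate (z - z') A = A'"
    using arg_cong[OF A'(2), of "translate (- z')"] by (simp add: translate_translate)
  ultimately have "z - z' = 0"
    using asymptotic_set_translate_eq_imp_0[OF pc dim as _ A'(1)] by blast
  then show "z' = z" by simp
qed

theorem corollary3p2:
  fixes C E F A1 A2 :: "'a::euclidean_space set" and z1 z2 :: 'a
  assumes "DIM('a) \<ge> 2"
    and "pointed_cone C"
    and "nondeg_pseudo_cone C E" and "nondeg_pseudo_cone C F"
    and "z1 \<in> C" and "asymptotic_set C A1" and "E = translate z1 A1"
    and "z2 \<in> C" and "asymptotic_set C A2" and "F = translate z2 A2"
  shows "minkowski_sum E F = translate (z1 + z2) (minkowski_sum A1 A2)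
    \<and> asymptotic_set C (minkowski_sum A1 A2)
    \<and> nondeg_pseudo_cone C (minkowski_sum E F)
    \<and> starting_point C (minkowski_sum E F) = z1 + z2"
proof -
  note dim = assms(1) and pc = assms(2) and cc = pointed_cone_convex_cone[OF assms(2)]
  have E: "pseudo_cone C E" and F: "pseudo_cone C F"
    using assms(3,4) by (simp_all add: nondeg_pseudo_cone_def)
  have rec1: "C \<subseteq> rec_cone A1" and rec2: "C \<subseteq> rec_cone A2"
    using E F assms(7,10) by (simp_all add: pseudo_cone_def rec_cone_translate)
  have EC: "E \<subseteq> C" and FC: "F \<subseteq> C"
    using translate_subset_convex_cone[OF cc] assms(5-10) asymptotic_set_subset by blast+
  have sum_eq: "minkowski_sum E F = translate (z1 + z2) (minkowski_sum A1 A2)"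
    using assms(7,10) minkowski_sum_translate by blast
  have as: "asymptotic_set C (minkowski_sum A1 A2)"
    using asymptotic_set_minkowski_sum[OF pc assms(6) rec1 assms(9) rec2] .
  have EF: "pseudo_cone C (minkowski_sum E F)" using pseudo_cone_minkowski_sum[OF pc E EC F FC] .
  have z: "z1 + z2 \<in> C" using convex_cone_add[OF cc assms(5,8)] .
  have "nondeg_pseudo_cone C (minkowski_sum E F)"
    unfolding nondeg_pseudo_cone_def using EF z as sum_eq by blast
  moreover have "starting_point C (minkowski_sum E F) = z1 + z2"
    using starting_point_translate[OF pc dim z as] EF sum_eq by (simp add: pseudo_cone_def)
  ultimately show ?thesis using sum_eq as by blast
qed

end
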